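(* Let $q>1$ and $a>0$. Define the probability distribution $p^{(a)}$ on $\mathbb{Z}$ by $$p^{(a)}_k=\begin{cases}f_q(a)^{-1}\Big(1-\dfrac{k^2}{a^2}\Big)^{\frac{1}{q-1}} & \text{if } |k|<a,\\ 0&\text{otherwise,}\end{cases}\qquad f_q(a)=\sum_{k\in\mathbb{Z},\,|k|<a}\Big(1-\frac{k^2}{a^2}\Big)^{\frac{1}{q-1}}.$$ Let $\sigma^2=\sum_k k^2p^{(a)}_k$. Then $p^{(a)}$ has zero mean and maximizes the Tsallis entropy $H_q$ over all probability distributions $p$ on $\mathbb{Z}$ satisfying $\sum_k k\,p_k=0$ and $\sum_k k^2p_k=\sigma^2$.
   Context: For a probability distribution $p=(p_k)_{k\in\mathbb{Z}}$ on $\mathbb{Z}$ and $q\neq 1$, the Tsallis entropy is $H_q(p)=\frac{1}{q-1}\big(1-\sum_{k\in\mathbb{Z}}p_k^q\big)$. *)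

theory Defs
  imports "HOL-Analysis.Analysis"
begin

definition prob_dist_int :: "(int \<Rightarrow> real) \<Rightarrow> bool" where
  "prob_dist_int p \<longleftrightarrow> (\<forall>k. 0 \<le> p k) \<and> (p has_sum 1) UNIV"

definition tsallis :: "real \<Rightarrow> (int \<Rightarrow> real) \<Rightarrow> real" where
  "tsallis q p = (1 - (\<Sum>\<^sub>\<infinity>k\<in>UNIV. p k powr q)) / (q - 1)"

definition fq :: "real \<Rightarrow> real \<Rightarrow> real" where
  "fq q a = (\<Sum>k\<in>{k::int. \<bar>real_of_int k\<bar> < a}.
               (1 - (real_of_int k)\<^sup>2 / a\<^sup>2) powr (1 / (q - 1)))"

definition pa :: "real \<Rightarrow> real \<Rightarrow> int \<Rightarrow> real" where
  "pa q a k = (if \<bar>real_of_int k\<bar> < a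
               then (1 - (real_of_int k)\<^sup>2 / a\<^sup>2) powr (1 / (q - 1)) / fq q a
               else 0)"

end

theory Submission
  imports Defs
begin

(* On its support, p^(a)_k^(q-1) equals c (1 - k^2/a^2) with c = f_q(a)^(1-q), an affine
   function of the constraint functions 1 and k^2, and off the support this function is
   nonpositive.  Convexity of
   x \<mapsto> x^q gives p_k^q \<ge> p^(a)_k^q + q c (1 - k^2/a^2) (p_k - p^(a)_k) for every k; summing,
   the right-hand side collapses to sum_k p^(a)_k^q because p and p^(a) have the same total
   mass and second moment. *)

lemma powr_ge_tangent:
  fixes x y q :: real
  assumes "q > 1" "x \<ge> 0" "y > 0"
  shows "x powr q \<ge> y powr q + q * y powr (q - 1) * (x - y)"
proof (cases "x = 0")
  case True
  have "y powr q = y powr (q - 1) * y"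
    using assms by (simp add: powr_diff)
  then show ?thesis
    using True assms by (simp add: algebra_simps)
next
  case False
  have deriv: "((\<lambda>x. x powr q) has_field_derivative q * y powr (q - 1)) (at y within {0<..})"
    using assms by (auto intro!: derivative_eq_intros)
  have "x powr q - y powr q \<ge> q * y powr (q - 1) * (x - y)"
    by (rule convex_on_imp_above_tangent[OF powr_convex _ _ _ deriv])
       (use assms False in \<open>auto simp: interior_open\<close>)
  then show ?thesis by simp
qed

lemma has_sum_diff:
  fixes f g :: "'a \<Rightarrow> 'b::topological_ab_group_add"
  assumes "(f has_sum a) A" "(g has_sum b) A"
  shows "((\<lambda>x. f x - g x) has_sum a - b) A"
  using has_sum_add[OF assms(1), of "\<lambda>x. - g x" "- b"] has_sum_uminus[of g A "- b"] assms(2)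
  by simp

lemma infsum_powr_le_of_tangent:
  fixes p r \<theta> :: "'a \<Rightarrow> real" and q L :: real
  assumes "q > 1" and p_nonneg: "\<And>k. p k \<ge> 0" and r_nonneg: "\<And>k. r k \<ge> 0"
    and p_summable: "(\<lambda>k. p k powr q) summable_on A"
    and r_summable: "(\<lambda>k. r k powr q) summable_on A"
    and \<theta>_pos: "\<And>k. r k > 0 \<Longrightarrow> r k powr (q - 1) = \<theta> k"
    and \<theta>_zero: "\<And>k. r k = 0 \<Longrightarrow> \<theta> k \<le> 0"
    and "((\<lambda>k. \<theta> k * p k) has_sum L) A" "((\<lambda>k. \<theta> k * r k) has_sum L) A"
  shows "(\<Sum>\<^sub>\<infinity>k\<in>A. r k powr q) \<le> (\<Sum>\<^sub>\<infinity>k\<in>A. p k powr q)"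
proof -
  define g where "g k = r k powr q + q * \<theta> k * (p k - r k)" for k
  have "(g has_sum (\<Sum>\<^sub>\<infinity>k\<in>A. r k powr q) + (q * L - q * L)) A"
    unfolding g_def right_diff_distrib mult.assoc
    by (intro has_sum_add has_sum_diff has_sum_cmult_right has_sum_infsum r_summable assms)
  moreover have "g k \<le> p k powr q" for k
  proof (cases "r k > 0")
    case True
    then show ?thesis
      using powr_ge_tangent[OF \<open>q > 1\<close> p_nonneg True] \<theta>_pos[OF True] by (simp add: g_def)
  next
    case False
    then have "r k = 0" using r_nonneg[of k] by simp
    then have "g k = q * (\<theta> k * p k)" by (simp add: g_def)
    also have "\<dots> \<le> 0"
      using \<theta>_zero[OF \<open>r k = 0\<close>] p_nonneg[of k] \<open>q > 1\<close>
      by (simp add: mult_nonneg_nonpos mult_nonpos_nonneg)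
    finally show ?thesis by (meson order_trans powr_ge_zero)
  qed
  ultimately show ?thesis
    using has_sum_mono[OF _ has_sum_infsum[OF p_summable]] by fastforce
qed

lemma prob_dist_int_le_one:
  assumes "prob_dist_int p"
  shows "p k \<le> 1"
proof -
  have "(p has_sum p k) {k}"
    by (rule has_sum_finiteI) auto
  moreover have "(p has_sum 1) UNIV" "\<And>j. p j \<ge> 0"
    using assms by (auto simp: prob_dist_int_def)
  ultimately show ?thesis
    using has_sum_mono_neutral[where f = p and g = p and A = "{k}" and B = UNIV] by auto
qed

lemma prob_dist_int_powr_summable:
  assumes "prob_dist_int p" "q \<ge> 1"
  shows "(\<lambda>k. p k powr q) summable_on UNIV"
proof (rule summable_on_comparison_test)
  show "p summable_on UNIV"
    using assms by (auto simp: prob_dist_int_def summable_on_def)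
  show "p k powr q \<le> p k" for k
    using powr_mono'[of 1 q "p k"] assms prob_dist_int_le_one[OF assms(1), of k]
    by (simp add: prob_dist_int_def)
qed simp

lemma tsallis_le_iff:
  assumes "q > 1"
  shows "tsallis q p \<le> tsallis q r \<longleftrightarrow> (\<Sum>\<^sub>\<infinity>k. r k powr q) \<le> (\<Sum>\<^sub>\<infinity>k. p k powr q)"
  using assms by (simp add: tsallis_def divide_right_mono_neg divide_le_cancel)

lemma finite_abs_less:
  "finite {k::int. \<bar>real_of_int k\<bar> < a}"
proof (rule finite_subset)
  show "{k::int. \<bar>real_of_int k\<bar> < a} \<subseteq> {-\<lceil>a\<rceil>..\<lceil>a\<rceil>}"
    by (auto simp: abs_less_iff) linarith+
qed auto

lemma abs_less_iff_one_minus_square_pos: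
  assumes "a > 0"
  shows "\<bar>x\<bar> < a \<longleftrightarrow> 1 - x\<^sup>2 / a\<^sup>2 > (0::real)"
proof -
  have "\<bar>x\<bar> < a \<longleftrightarrow> x\<^sup>2 < a\<^sup>2"
    using assms by (metis abs_le_square_iff abs_of_pos not_le)
  also have "\<dots> \<longleftrightarrow> 1 - x\<^sup>2 / a\<^sup>2 > 0"
    using assms by (simp add: divide_less_eq)
  finally show ?thesis .
qed

lemma fq_pos:
  assumes "a > 0"
  shows "fq q a > 0"
  unfolding fq_def
proof (rule sum_pos2[OF finite_abs_less])
  show "(0::int) \<in> {k. \<bar>real_of_int k\<bar> < a}"
    using assms by simp
qed (use assms in \<open>simp_all add: abs_less_iff_one_minus_square_pos\<close>)

lemma pa_nonneg:
  assumes "a > 0"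
  shows "pa q a k \<ge> 0"
  using fq_pos[OF assms, of q] by (simp add: pa_def divide_nonneg_pos)

lemma pa_pos_iff:
  assumes "a > 0"
  shows "pa q a k > 0 \<longleftrightarrow> \<bar>real_of_int k\<bar> < a"
  using fq_pos[OF assms, of q] abs_less_iff_one_minus_square_pos[OF assms, of "real_of_int k"]
  by (auto simp: pa_def)

lemma pa_minus: "pa q a (- k) = pa q a k"
  by (simp add: pa_def)

lemma has_sum_pa_weighted:
  "((\<lambda>k. f k * pa q a k) has_sum (\<Sum>k\<in>{k. \<bar>real_of_int k\<bar> < a}. f k * pa q a k)) UNIV"
  by (rule has_sum_finite_neutralI[OF finite_abs_less[of a]]) (simp_all add: pa_def)

lemma prob_dist_int_pa:
  assumes "a > 0"
  shows "prob_dist_int (pa q a)"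
proof -
  have "(\<Sum>k\<in>{k. \<bar>real_of_int k\<bar> < a}. pa q a k) = 1"
    using fq_pos[OF assms, of q] by (simp add: pa_def fq_def flip: sum_divide_distrib)
  then show ?thesis
    using has_sum_pa_weighted[of "\<lambda>_. 1" q a] pa_nonneg[OF assms]
    by (simp add: prob_dist_int_def)
qed

lemma pa_mean_zero: "((\<lambda>k. real_of_int k * pa q a k) has_sum 0) UNIV"
proof -
  let ?S = "{k::int. \<bar>real_of_int k\<bar> < a}"
  have "(\<Sum>k\<in>?S. real_of_int k * pa q a k) = (\<Sum>k\<in>?S. real_of_int (- k) * pa q a (- k))"
    by (rule sum.reindex_bij_witness[of _ uminus uminus]) auto
  also have "\<dots> = - (\<Sum>k\<in>?S. real_of_int k * pa q a k)"
    by (simp add: pa_minus sum_negf)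
  finally have "(\<Sum>k\<in>?S. real_of_int k * pa q a k) = 0"
    by simp
  then show ?thesis
    using has_sum_pa_weighted[where f = real_of_int and q = q and a = a] by simp
qed

lemma pa_powr_on_support:
  assumes "q > 1" "a > 0" "\<bar>real_of_int k\<bar> < a"
  shows "pa q a k powr (q - 1) = fq q a powr (1 - q) * (1 - (real_of_int k)\<^sup>2 / a\<^sup>2)"
proof -
  have pos: "1 - (real_of_int k)\<^sup>2 / a\<^sup>2 > 0"
    using assms abs_less_iff_one_minus_square_pos by blast
  have "pa q a k powr (q - 1)
      = ((1 - (real_of_int k)\<^sup>2 / a\<^sup>2) powr (1 / (q - 1))) powr (q - 1) / fq q a powr (q - 1)"
    using assms fq_pos[OF assms(2)] by (simp add: pa_def powr_divide)
  also have "\<dots> = (1 - (real_of_int k)\<^sup>2 / a\<^sup>2) / fq q a powr (q - 1)"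
    using pos assms by (simp add: powr_powr)
  moreover have "fq q a powr (1 - q) = 1 / fq q a powr (q - 1)"
    using powr_minus_divide[of "fq q a" "q - 1"] by simp
  ultimately show ?thesis
    by simp
qed

lemma has_sum_one_minus_square_weight:
  assumes "prob_dist_int p" "((\<lambda>k. (real_of_int k)\<^sup>2 * p k) has_sum s) UNIV"
  shows "((\<lambda>k. c * (1 - (real_of_int k)\<^sup>2 / a\<^sup>2) * p k) has_sum c * (1 - s / a\<^sup>2)) UNIV"
proof -
  have "((\<lambda>k. c * p k - c / a\<^sup>2 * ((real_of_int k)\<^sup>2 * p k)) has_sum c * 1 - c / a\<^sup>2 * s) UNIV"
    using assms by (intro has_sum_diff has_sum_cmult_right) (auto simp: prob_dist_int_def)
  then show ?thesis
    by (simp add: algebra_simps)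
qed

lemma tsallis_le_pa:
  fixes q a :: real and p :: "int \<Rightarrow> real"
  defines "\<sigma>2 \<equiv> (\<Sum>\<^sub>\<infinity>k. (real_of_int k)\<^sup>2 * pa q a k)"
  assumes "q > 1" "a > 0" and p: "prob_dist_int p"
    and p_\<sigma>2: "((\<lambda>k. (real_of_int k)\<^sup>2 * p k) has_sum \<sigma>2) UNIV"
  shows "tsallis q p \<le> tsallis q (pa q a)"
  unfolding tsallis_le_iff[OF \<open>q > 1\<close>]
proof (rule infsum_powr_le_of_tangent[OF \<open>q > 1\<close>])
  define \<theta> where "\<theta> k = fq q a powr (1 - q) * (1 - (real_of_int k)\<^sup>2 / a\<^sup>2)" for k
  have pa: "prob_dist_int (pa q a)"
    using prob_dist_int_pa[OF \<open>a > 0\<close>] .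
  show "p k \<ge> 0" "pa q a k \<ge> 0" for k
    using p pa by (simp_all add: prob_dist_int_def)
  show "(\<lambda>k. p k powr q) summable_on UNIV" "(\<lambda>k. pa q a k powr q) summable_on UNIV"
    using prob_dist_int_powr_summable p pa \<open>q > 1\<close> by simp_all
  show "pa q a k powr (q - 1) = \<theta> k" if "pa q a k > 0" for k
    using that pa_powr_on_support[OF \<open>q > 1\<close> \<open>a > 0\<close>] pa_pos_iff[OF \<open>a > 0\<close>] by (simp add: \<theta>_def)
  show "\<theta> k \<le> 0" if "pa q a k = 0" for k
    using that pa_pos_iff[OF \<open>a > 0\<close>, of q k] abs_less_iff_one_minus_square_pos[OF \<open>a > 0\<close>]
    by (simp add: \<theta>_def mult_nonneg_nonpos)
  show "((\<lambda>k. \<theta> k * p k) has_sum fq q a powr (1 - q) * (1 - \<sigma>2 / a\<^sup>2)) UNIV"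
    unfolding \<theta>_def using has_sum_one_minus_square_weight[OF p p_\<sigma>2] .
  have "((\<lambda>k. (real_of_int k)\<^sup>2 * pa q a k) has_sum \<sigma>2) UNIV"
    unfolding \<sigma>2_def using has_sum_pa_weighted by (metis infsumI)
  then show "((\<lambda>k. \<theta> k * pa q a k) has_sum fq q a powr (1 - q) * (1 - \<sigma>2 / a\<^sup>2)) UNIV"
    unfolding \<theta>_def using has_sum_one_minus_square_weight[OF pa] by blast
qed

theorem theorem2:
  fixes q a :: real
  assumes "q > 1" and "a > 0"
  defines "\<sigma>2 \<equiv> (\<Sum>\<^sub>\<infinity>k\<in>UNIV. (real_of_int k)\<^sup>2 * pa q a k)"
  shows "prob_dist_int (pa q a)
    \<and> ((\<lambda>k. real_of_int k * pa q a k) has_sum 0) UNIV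
    \<and> (\<forall>p. prob_dist_int p
           \<and> ((\<lambda>k. real_of_int k * p k) has_sum 0) UNIV
           \<and> ((\<lambda>k. (real_of_int k)\<^sup>2 * p k) has_sum \<sigma>2) UNIV
           \<longrightarrow> tsallis q p \<le> tsallis q (pa q a))"
  using prob_dist_int_pa[OF \<open>a > 0\<close>] pa_mean_zero tsallis_le_pa[OF assms(1,2)]
  unfolding \<sigma>2_def by blast

end
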